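(* Let $f=f_{TS_1S_2}$ be a probability density on the joint space of continuous real random variables $(T,S_1,S_2)$ such that $f$ and all its marginal densities are bounded from below by some $\xi>0$. Then the global redundancy $$ I^{\mathrm{sx}}_\cap[f]=\int \mathrm{d}t\,\mathrm{d}s_1\,\mathrm{d}s_2\; f(t,s_1,s_2)\, i^{\mathrm{sx}}_\cap[f](t,\{s_1\}\{s_2\}), \qquad i^{\mathrm{sx}}_\cap[f](t,\{s_1\}\{s_2\})=\log_2\left[\frac{f_{TS_1}(t,s_1)+f_{TS_2}(t,s_2)}{f_T(t)\,(f_{S_1}(s_1)+f_{S_2}(s_2))}\right], $$ is a smooth functional of the underlying density $f$.
   Context: $f_T,f_{S_1},f_{S_2},f_{TS_1},f_{TS_2}$ denote the marginal densities of $f$. Smoothness of the functional refers to differentiability (of all orders) of $\epsilon\mapsto I^{\mathrm{sx}}_\cap[f+\epsilon g]$ for perturbation directions $g$. *)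

theory Defs
  imports "HOL-Analysis.Analysis"
begin

text \<open>Joint space of (T,S1,S2): the box X x Y x Z of real sets (the supports of the
  three variables); densities are curried functions f t s1 s2.\<close>

definition M3 :: "(real \<times> real \<times> real) measure" where
  "M3 = lborel \<Otimes>\<^sub>M (lborel \<Otimes>\<^sub>M lborel)"

definition marg_TS1 :: "real set \<Rightarrow> real set \<Rightarrow> real set \<Rightarrow> (real \<Rightarrow> real \<Rightarrow> real \<Rightarrow> real) \<Rightarrow> real \<Rightarrow> real \<Rightarrow> real" where
  "marg_TS1 X Y Z f t s1 = (LINT s2:Z|lborel. f t s1 s2)"

definition marg_TS2 :: "real set \<Rightarrow> real set \<Rightarrow> real set \<Rightarrow> (real \<Rightarrow> real \<Rightarrow> real \<Rightarrow> real) \<Rightarrow> real \<Rightarrow> real \<Rightarrow> real" where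
  "marg_TS2 X Y Z f t s2 = (LINT s1:Y|lborel. f t s1 s2)"

definition marg_T :: "real set \<Rightarrow> real set \<Rightarrow> real set \<Rightarrow> (real \<Rightarrow> real \<Rightarrow> real \<Rightarrow> real) \<Rightarrow> real \<Rightarrow> real" where
  "marg_T X Y Z f t = (LINT s1:Y|lborel. marg_TS1 X Y Z f t s1)"

definition marg_S1 :: "real set \<Rightarrow> real set \<Rightarrow> real set \<Rightarrow> (real \<Rightarrow> real \<Rightarrow> real \<Rightarrow> real) \<Rightarrow> real \<Rightarrow> real" where
  "marg_S1 X Y Z f s1 = (LINT t:X|lborel. marg_TS1 X Y Z f t s1)"

definition marg_S2 :: "real set \<Rightarrow> real set \<Rightarrow> real set \<Rightarrow> (real \<Rightarrow> real \<Rightarrow> real \<Rightarrow> real) \<Rightarrow> real \<Rightarrow> real" where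
  "marg_S2 X Y Z f s2 = (LINT t:X|lborel. marg_TS2 X Y Z f t s2)"

definition i_sx_cap :: "real set \<Rightarrow> real set \<Rightarrow> real set \<Rightarrow> (real \<Rightarrow> real \<Rightarrow> real \<Rightarrow> real) \<Rightarrow> real \<Rightarrow> real \<Rightarrow> real \<Rightarrow> real" where
  "i_sx_cap X Y Z f t s1 s2 =
     log 2 ((marg_TS1 X Y Z f t s1 + marg_TS2 X Y Z f t s2) /
            (marg_T X Y Z f t * (marg_S1 X Y Z f s1 + marg_S2 X Y Z f s2)))"

definition I_sx_cap :: "real set \<Rightarrow> real set \<Rightarrow> real set \<Rightarrow> (real \<Rightarrow> real \<Rightarrow> real \<Rightarrow> real) \<Rightarrow> real" where
  "I_sx_cap X Y Z f =
     (LINT x:(X \<times> Y \<times> Z)|M3. f (fst x) (fst (snd x)) (snd (snd x)) *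
        i_sx_cap X Y Z f (fst x) (fst (snd x)) (snd (snd x)))"

end

theory Submission
  imports Defs
begin

text \<open>
  Perturb f by a bounded measurable g. All marginals of f + e g are affine in e, and the lower
  bound \<xi> on f and its marginals forces X, Y, Z to have finite measure, so the marginals of g are
  bounded and their ratios to the corresponding marginals of f are bounded by some q. By the series
  of ln (1 + z), for |e| < 1/q the local redundancy of f + e g is that of f plus a power series
  in e whose coefficients decay like q^n, uniformly on the support. Integrating term by term
  against f + e g writes I[f + e g] as a power series plus e times a power series, hence a smooth
  function of e. If f times its local redundancy is not integrable then, because f + e g stays
  bounded below, neither is the perturbed integrand, and I[f + e g] is the junk value 0 for all
  small e.
\<close>

section \<open>Integrability and termwise integration\<close>

abbreviation uncurry3 :: "('a \<Rightarrow> 'b \<Rightarrow> 'c \<Rightarrow> 'd) \<Rightarrow> 'a \<times> 'b \<times> 'c \<Rightarrow> 'd" where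
  "uncurry3 h x \<equiv> h (fst x) (fst (snd x)) (snd (snd x))"

lemma set_integrable_mult_bounded:
  fixes h k :: "'a \<Rightarrow> real"
  assumes h: "set_integrable M A h" and k: "k \<in> borel_measurable M"
    and bound: "\<And>x. x \<in> A \<Longrightarrow> \<bar>k x\<bar> \<le> C"
  shows "set_integrable M A (\<lambda>x. h x * k x)"
proof (rule set_integrable_bound)
  show "set_integrable M A (\<lambda>x. C * h x)"
    using h by simp
  have "(\<lambda>x. (indicator A x *\<^sub>R h x) * k x) \<in> borel_measurable M"
    using h k unfolding set_integrable_def by measurable
  then show "set_borel_measurable M A (\<lambda>x. h x * k x)"
    unfolding set_borel_measurable_def by (simp add: mult.assoc)
  show "AE x in M. x \<in> A \<longrightarrow> norm (h x * k x) \<le> norm (C * h x)"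
  proof (intro AE_I2 impI)
    fix x assume "x \<in> A"
    then have "\<bar>k x\<bar> \<le> \<bar>C\<bar>"
      using bound order_trans abs_ge_self by blast
    then show "norm (h x * k x) \<le> norm (C * h x)"
      by (simp add: abs_mult mult.commute[of "\<bar>C\<bar>"] mult_left_mono)
  qed
qed

lemma set_integrable_if_set_integral_nonzero:
  fixes p :: "'a \<Rightarrow> real"
  shows "(LINT x:A|M. p x) \<noteq> 0 \<Longrightarrow> set_integrable M A p"
  using not_integrable_integral_eq unfolding set_integrable_def set_lebesgue_integral_def by blast

lemma emeasure_finite_if_set_integrable_bounded_below:
  fixes p :: "'a \<Rightarrow> real"
  assumes A: "A \<in> sets M" and p: "set_integrable M A p"
    and lb: "\<And>x. x \<in> A \<Longrightarrow> c \<le> p x" and c: "0 < c"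
  shows "emeasure M A < \<infinity>"
proof -
  have "set_integrable M A (\<lambda>x. 1 :: real)"
  proof (rule set_integrable_bound)
    show "set_integrable M A (\<lambda>x. p x / c)"
      using p c by simp
    show "set_borel_measurable M A (\<lambda>x. 1 :: real)"
      using A unfolding set_borel_measurable_def by simp
    show "AE x in M. x \<in> A \<longrightarrow> norm (1 :: real) \<le> norm (p x / c)"
    proof (intro AE_I2 impI)
      fix x assume "x \<in> A"
      then have "c \<le> p x"
        by (rule lb)
      with c show "norm (1 :: real) \<le> norm (p x / c)"
        by (simp add: field_simps)
    qed
  qed
  then show ?thesis
    using A unfolding set_integrable_def by (simp add: integrable_indicator_iff sets.Int_space_eq2)
qed

lemma set_integrable_bounded_finite_emeasure:
  fixes q :: "'a \<Rightarrow> real"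
  assumes "A \<in> sets M" "emeasure M A < \<infinity>" "q \<in> borel_measurable M" "\<And>x. x \<in> A \<Longrightarrow> \<bar>q x\<bar> \<le> C"
  shows "set_integrable M A q"
  using assms unfolding set_integrable_def by (intro integrableI_bounded_set_indicator) auto

lemma abs_set_integral_le_measure:
  fixes q :: "'a \<Rightarrow> real"
  assumes A: "A \<in> sets M" and fin: "emeasure M A < \<infinity>" and q: "q \<in> borel_measurable M"
    and bound: "\<And>x. x \<in> A \<Longrightarrow> \<bar>q x\<bar> \<le> C"
  shows "\<bar>LINT x:A|M. q x\<bar> \<le> C * measure M A"
proof -
  have "\<bar>LINT x:A|M. q x\<bar> \<le> (LINT x:A|M. \<bar>q x\<bar>)"
    using set_integral_norm_bound[OF set_integrable_bounded_finite_emeasure[OF assms]] by simp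
  also have "\<dots> \<le> (LINT x:A|M. C)"
    using assms by (intro set_integral_mono set_integrable_abs set_integrable_bounded_finite_emeasure[of _ _ _ "\<bar>C\<bar>"])
      (auto intro: order_trans[OF _ abs_ge_self])
  also have "\<dots> = C * measure M A"
    using A fin by (simp add: set_integral_const)
  finally show ?thesis .
qed

lemma set_integral_add_scaled:
  fixes p q r :: "'a \<Rightarrow> real"
  assumes "A \<in> sets M" "set_integrable M A p" "set_integrable M A q"
    and "\<And>x. x \<in> A \<Longrightarrow> r x = p x + e * q x"
  shows "(LINT x:A|M. r x) = (LINT x:A|M. p x) + e * (LINT x:A|M. q x)"
proof -
  have "(LINT x:A|M. r x) = (LINT x:A|M. p x + e * q x)"
    using assms by (intro set_lebesgue_integral_cong) auto
  also have "\<dots> = (LINT x:A|M. p x) + e * (LINT x:A|M. q x)"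
    using assms by (subst set_integral_add(2)) auto
  finally show ?thesis .
qed

lemma set_integrable_if_mult_bounded_below:
  fixes R L :: "'a \<Rightarrow> real"
  assumes A: "A \<in> sets M" and RL: "set_integrable M A (\<lambda>x. R x * L x)" and L: "L \<in> borel_measurable M"
    and lb: "\<And>x. x \<in> A \<Longrightarrow> c \<le> R x" and c: "0 < c"
  shows "set_integrable M A L"
proof (rule set_integrable_bound)
  show "set_integrable M A (\<lambda>x. R x * L x / c)"
    using RL c by simp
  show "set_borel_measurable M A L"
    using A L unfolding set_borel_measurable_def by measurable
  show "AE x in M. x \<in> A \<longrightarrow> norm (L x) \<le> norm (R x * L x / c)"
  proof (intro AE_I2 impI)
    fix x assume "x \<in> A"
    then have "c * \<bar>L x\<bar> \<le> R x * \<bar>L x\<bar>" and "0 < R x"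
      using lb[of x] c by (auto intro: mult_right_mono)
    then show "norm (L x) \<le> norm (R x * L x / c)"
      using c by (simp add: abs_mult field_simps)
  qed
qed

lemma set_integrable_add_iff:
  fixes f g :: "'a \<Rightarrow> real"
  assumes "set_integrable M A g"
  shows "set_integrable M A (\<lambda>x. f x + g x) \<longleftrightarrow> set_integrable M A f"
proof
  assume "set_integrable M A (\<lambda>x. f x + g x)"
  from set_integral_diff(1)[OF this assms] show "set_integrable M A f"
    by simp
qed (use assms in auto)

lemma set_integrable_affine_mult_iff:
  fixes P Q L :: "'a \<Rightarrow> real"
  assumes A: "A \<in> sets M" and L: "L \<in> borel_measurable M"
    and Q: "Q \<in> borel_measurable M" "\<And>x. x \<in> A \<Longrightarrow> \<bar>Q x\<bar> \<le> B"
    and P_lb: "\<And>x. x \<in> A \<Longrightarrow> c \<le> P x" and perturbed_lb: "\<And>x. x \<in> A \<Longrightarrow> c \<le> P x + e * Q x"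
    and c: "0 < c"
  shows "set_integrable M A (\<lambda>x. (P x + e * Q x) * L x) \<longleftrightarrow> set_integrable M A (\<lambda>x. P x * L x)"
proof
  assume int: "set_integrable M A (\<lambda>x. (P x + e * Q x) * L x)"
  have "set_integrable M A L"
    by (rule set_integrable_if_mult_bounded_below[OF A int L perturbed_lb c])
  then have "set_integrable M A (\<lambda>x. (P x + e * Q x) * L x - e * (L x * Q x))"
    using int set_integrable_mult_bounded[OF _ Q] by auto
  then show "set_integrable M A (\<lambda>x. P x * L x)"
    by (simp add: algebra_simps)
next
  assume int: "set_integrable M A (\<lambda>x. P x * L x)"
  have "set_integrable M A L"
    by (rule set_integrable_if_mult_bounded_below[OF A int L P_lb c])
  then have "set_integrable M A (\<lambda>x. P x * L x + e * (L x * Q x))"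
    using int set_integrable_mult_bounded[OF _ Q] by auto
  then show "set_integrable M A (\<lambda>x. (P x + e * Q x) * L x)"
    by (simp add: algebra_simps)
qed

lemma abs_set_integral_mult_le:
  fixes P r :: "'a \<Rightarrow> real"
  assumes P: "set_integrable M A P" and r: "r \<in> borel_measurable M"
    and bound: "\<And>x. x \<in> A \<Longrightarrow> \<bar>r x\<bar> \<le> K"
  shows "\<bar>LINT x:A|M. P x * r x\<bar> \<le> (LINT x:A|M. \<bar>P x\<bar>) * K"
proof -
  have "\<bar>LINT x:A|M. P x * r x\<bar> \<le> (LINT x:A|M. \<bar>P x * r x\<bar>)"
    using set_integral_norm_bound[OF set_integrable_mult_bounded[OF assms]] by simp
  also have "\<dots> \<le> (LINT x:A|M. \<bar>P x\<bar> * K)"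
    using assms by (intro set_integral_mono set_integrable_abs set_integrable_mult_bounded)
      (auto simp: abs_mult intro: mult_left_mono)
  also have "\<dots> = (LINT x:A|M. \<bar>P x\<bar>) * K"
    by simp
  finally show ?thesis .
qed

lemma summable_power_series_geometric_bound:
  fixes a :: "nat \<Rightarrow> real"
  assumes bound: "\<And>n. \<bar>a n\<bar> \<le> C * q ^ n" and q: "0 \<le> q" and y: "\<bar>y\<bar> * q < 1"
  shows "summable (\<lambda>n. a n * y ^ n)"
proof (rule summable_comparison_test)
  show "summable (\<lambda>n. C * (\<bar>y\<bar> * q) ^ n)"
    using y q by (intro summable_mult summable_geometric) auto
  show "\<exists>N. \<forall>n\<ge>N. norm (a n * y ^ n) \<le> C * (\<bar>y\<bar> * q) ^ n"
    using mult_right_mono[OF bound abs_ge_zero[of "y ^ _"]]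
    by (auto simp: abs_mult power_abs power_mult_distrib algebra_simps)
qed

lemma integral_suminf_geometric_dominated:
  fixes F :: "nat \<Rightarrow> 'a \<Rightarrow> real"
  assumes F: "\<And>n. integrable M (F n)" and G: "integrable M G"
    and dominated: "\<And>n x. norm (F n x) \<le> G x * (C * k ^ n)" and k: "0 \<le> k" "k < 1"
  shows "integrable M (\<lambda>x. \<Sum>n. F n x)" and "(\<integral>x. (\<Sum>n. F n x) \<partial>M) = (\<Sum>n. integral\<^sup>L M (F n))"
proof -
  have geometric: "summable (\<lambda>n. a * (C * k ^ n))" for a
    using k by (intro summable_mult summable_mult summable_geometric) auto
  have "summable (\<lambda>n. \<integral>x. norm (F n x) \<partial>M)"
    using integral_mono[OF integrable_norm[OF F] integrable_mult_left[OF G] dominated]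
    by (intro summable_comparison_test[OF _ geometric[of "integral\<^sup>L M G"]]) auto
  moreover have "AE x in M. summable (\<lambda>n. norm (F n x))"
    using dominated by (intro AE_I2 summable_comparison_test[OF _ geometric[of "G _"]]) auto
  ultimately show "integrable M (\<lambda>x. \<Sum>n. F n x)" "(\<integral>x. (\<Sum>n. F n x) \<partial>M) = (\<Sum>n. integral\<^sup>L M (F n))"
    using integrable_suminf[OF F] integral_suminf[OF F] by auto
qed

lemma set_integral_power_series:
  fixes P :: "'a \<Rightarrow> real" and r :: "nat \<Rightarrow> 'a \<Rightarrow> real"
  assumes P: "set_integrable M A P" and r: "\<And>n. r n \<in> borel_measurable M"
    and bound: "\<And>n x. x \<in> A \<Longrightarrow> \<bar>r n x\<bar> \<le> C * q ^ n" and q: "0 \<le> q" and e: "\<bar>e\<bar> * q < 1"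
  shows "set_integrable M A (\<lambda>x. P x * (\<Sum>n. r n x * e ^ n))"
    and "(LINT x:A|M. P x * (\<Sum>n. r n x * e ^ n)) = (\<Sum>n. (LINT x:A|M. P x * r n x) * e ^ n)"
proof -
  define F where "F n x = indicator A x *\<^sub>R (P x * (r n x * e ^ n))" for n x
  have dominated: "norm (F n x) \<le> \<bar>indicator A x *\<^sub>R P x\<bar> * (C * (\<bar>e\<bar> * q) ^ n)" for n x
  proof (cases "x \<in> A")
    case True
    have "\<bar>r n x\<bar> * \<bar>e\<bar> ^ n \<le> C * q ^ n * \<bar>e\<bar> ^ n"
      using bound[OF True] by (rule mult_right_mono) simp
    then have "\<bar>P x\<bar> * (\<bar>r n x\<bar> * \<bar>e\<bar> ^ n) \<le> \<bar>P x\<bar> * (C * q ^ n * \<bar>e\<bar> ^ n)"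
      by (rule mult_left_mono) simp
    then show ?thesis
      using True by (simp add: F_def abs_mult power_abs power_mult_distrib algebra_simps)
  qed (simp add: F_def)
  have "set_integrable M A (\<lambda>x. P x * (r n x * e ^ n))" for n
    using r[of n] bound by (intro set_integrable_mult_bounded[OF P, where C = "C * q ^ n * \<bar>e\<bar> ^ n"])
      (auto simp: abs_mult power_abs intro: mult_right_mono)
  then have F_int: "integrable M (F n)" for n
    unfolding F_def set_integrable_def .
  have P_int: "integrable M (\<lambda>x. \<bar>indicator A x *\<^sub>R P x\<bar>)"
    using P unfolding set_integrable_def by (rule integrable_abs)
  note F_suminf =
    integral_suminf_geometric_dominated[OF F_int P_int dominated mult_nonneg_nonneg[OF abs_ge_zero q] e]
  have "(\<Sum>n. F n x) = indicator A x *\<^sub>R (P x * (\<Sum>n. r n x * e ^ n))" for x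
  proof (cases "x \<in> A")
    case True
    have "summable (\<lambda>n. r n x * e ^ n)"
      using bound[OF True] q e by (rule summable_power_series_geometric_bound)
    then show ?thesis
      using True by (simp add: F_def suminf_mult)
  qed (simp add: F_def)
  then have sum_F: "(\<lambda>x. \<Sum>n. F n x) = (\<lambda>x. indicator A x *\<^sub>R (P x * (\<Sum>n. r n x * e ^ n)))"
    by (rule ext)
  show "set_integrable M A (\<lambda>x. P x * (\<Sum>n. r n x * e ^ n))"
    using F_suminf(1) unfolding sum_F set_integrable_def .
  have "integral\<^sup>L M (F n) = (LINT x:A|M. e ^ n * (P x * r n x))" for n
    unfolding F_def set_lebesgue_integral_def by (simp add: algebra_simps)
  then have F_integral: "integral\<^sup>L M (F n) = (LINT x:A|M. P x * r n x) * e ^ n" for n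
    by (simp add: mult.commute)
  have "(LINT x:A|M. P x * (\<Sum>n. r n x * e ^ n)) = integral\<^sup>L M (\<lambda>x. \<Sum>n. F n x)"
    unfolding sum_F set_lebesgue_integral_def ..
  also have "\<dots> = (\<Sum>n. integral\<^sup>L M (F n))"
    by (rule F_suminf(2))
  finally show "(LINT x:A|M. P x * (\<Sum>n. r n x * e ^ n)) = (\<Sum>n. (LINT x:A|M. P x * r n x) * e ^ n)"
    unfolding F_integral .
qed

lemma set_integral_affine_times_series:
  fixes P Q L :: "'a \<Rightarrow> real" and r :: "nat \<Rightarrow> 'a \<Rightarrow> real"
  assumes A: "A \<in> sets M" and P: "set_integrable M A P"
    and lb: "\<And>x. x \<in> A \<Longrightarrow> c \<le> P x" "\<And>x. x \<in> A \<Longrightarrow> c \<le> P x + e * Q x" and c: "0 < c"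
    and Q: "Q \<in> borel_measurable M" "\<And>x. x \<in> A \<Longrightarrow> \<bar>Q x\<bar> \<le> B"
    and L: "L \<in> borel_measurable M"
    and r: "\<And>n. r n \<in> borel_measurable M" "\<And>n x. x \<in> A \<Longrightarrow> \<bar>r n x\<bar> \<le> C * q ^ n"
    and q: "0 \<le> q" and e: "\<bar>e\<bar> * q < 1"
  shows "(LINT x:A|M. (P x + e * Q x) * (L x + (\<Sum>n. r n x * e ^ n))) =
    (if set_integrable M A (\<lambda>x. P x * L x)
     then (LINT x:A|M. P x * L x) + e * (LINT x:A|M. L x * Q x)
       + ((\<Sum>n. (LINT x:A|M. P x * r n x) * e ^ n) + e * (\<Sum>n. (LINT x:A|M. Q x * r n x) * e ^ n))
     else 0)"
proof -
  define S where "S x = (\<Sum>n. r n x * e ^ n)" for x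
  have Q_int: "set_integrable M A Q"
    using emeasure_finite_if_set_integrable_bounded_below[OF A P lb(1) c]
    by (rule set_integrable_bounded_finite_emeasure[OF A _ Q])
  have series: "set_integrable M A (\<lambda>x. R x * S x)"
    "(LINT x:A|M. R x * S x) = (\<Sum>n. (LINT x:A|M. R x * r n x) * e ^ n)"
    if "set_integrable M A R" for R
    using set_integral_power_series[OF that r q e] unfolding S_def by auto
  have split: "(\<lambda>x. (P x + e * Q x) * (L x + S x)) = (\<lambda>x. (P x + e * Q x) * L x + (P x * S x + e * (Q x * S x)))"
    by (simp add: fun_eq_iff algebra_simps)
  show ?thesis
  proof (cases "set_integrable M A (\<lambda>x. P x * L x)")
    case True
    have "set_integrable M A L"
      by (rule set_integrable_if_mult_bounded_below[OF A True L lb(1) c])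
    then have "set_integrable M A (\<lambda>x. L x * Q x)"
      using set_integrable_mult_bounded[OF _ Q] by blast
    moreover have "(\<lambda>x. (P x + e * Q x) * L x) = (\<lambda>x. P x * L x + e * (L x * Q x))"
      by (simp add: fun_eq_iff algebra_simps)
    ultimately show ?thesis
      unfolding S_def[symmetric] split using True series[OF P] series[OF Q_int] by simp
  next
    case False
    then have "\<not> set_integrable M A (\<lambda>x. (P x + e * Q x) * L x)"
      using set_integrable_affine_mult_iff[OF A L Q lb c] by simp
    then have "\<not> set_integrable M A (\<lambda>x. (P x + e * Q x) * (L x + S x))"
      unfolding split using series[OF P] series[OF Q_int] by (subst set_integrable_add_iff) auto
    then show ?thesis
      using False not_integrable_integral_eq unfolding S_def set_integrable_def set_lebesgue_integral_def
      by auto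
  qed
qed

section \<open>Smooth functions of a real parameter\<close>

definition smooth_on_ball :: "real \<Rightarrow> (real \<Rightarrow> real) \<Rightarrow> bool" where
  "smooth_on_ball d h \<longleftrightarrow> (\<exists>D :: nat \<Rightarrow> real \<Rightarrow> real. D 0 = h \<and>
     (\<forall>n. \<forall>e\<in>{-d<..<d}. (D n has_real_derivative D (Suc n) e) (at e)))"

lemma smooth_on_ball_const: "smooth_on_ball d (\<lambda>_. c)"
  unfolding smooth_on_ball_def
  by (rule exI[of _ "\<lambda>n. if n = 0 then (\<lambda>_. c) else (\<lambda>_. 0)"]) auto

lemma smooth_on_ball_add:
  assumes "smooth_on_ball d h1" "smooth_on_ball d h2"
  shows "smooth_on_ball d (\<lambda>e. h1 e + h2 e)"
proof -
  obtain D1 where "D1 0 = h1" "\<And>n e. e \<in> {-d<..<d} \<Longrightarrow> (D1 n has_real_derivative D1 (Suc n) e) (at e)"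
    using assms(1) unfolding smooth_on_ball_def by blast
  moreover obtain D2 where "D2 0 = h2" "\<And>n e. e \<in> {-d<..<d} \<Longrightarrow> (D2 n has_real_derivative D2 (Suc n) e) (at e)"
    using assms(2) unfolding smooth_on_ball_def by blast
  ultimately show ?thesis
    unfolding smooth_on_ball_def by (intro exI[of _ "\<lambda>n e. D1 n e + D2 n e"]) (auto intro!: derivative_intros)
qed

lemma smooth_on_ball_times_var:
  assumes "smooth_on_ball d h"
  shows "smooth_on_ball d (\<lambda>e. e * h e)"
proof -
  obtain D where D0: "D 0 = h"
    and D: "\<And>n e. e \<in> {-d<..<d} \<Longrightarrow> (D n has_real_derivative D (Suc n) e) (at e)"
    using assms unfolding smooth_on_ball_def by blast
  (* Leibniz rule: the n-th derivative of e * h e is e * h^(n) e + n * h^(n-1) e. *)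
  define D' where "D' n = (\<lambda>e. e * D n e + real n * D (n - 1) e)" for n
  have "(D' n has_real_derivative D' (Suc n) e) (at e)" if e: "e \<in> {-d<..<d}" for n e
    unfolding D'_def using D[OF e, of n] D[OF e, of "n - 1"]
    by (cases n) (auto simp: algebra_simps intro!: derivative_eq_intros)
  moreover have "D' 0 = (\<lambda>e. e * h e)"
    by (simp add: D'_def D0 fun_eq_iff)
  ultimately show ?thesis
    unfolding smooth_on_ball_def by blast
qed

lemma smooth_on_ball_power_series:
  fixes a :: "nat \<Rightarrow> real"
  assumes summable: "\<And>y. \<bar>y\<bar> < R \<Longrightarrow> summable (\<lambda>n. a n * y ^ n)" and "d \<le> R"
  shows "smooth_on_ball d (\<lambda>e. \<Sum>n. a n * e ^ n)"
proof -
  have diffs_summable: "summable (\<lambda>n. (diffs ^^ k) a n * y ^ n)" if "\<bar>y\<bar> < R" for k y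
    using that
  proof (induction k arbitrary: y)
    case (Suc k)
    then show ?case
      using termdiff_converges[of y R "(diffs ^^ k) a"] by simp
  qed (simp add: summable)
  define D where "D k = (\<lambda>e. \<Sum>n. (diffs ^^ k) a n * e ^ n)" for k
  have "(D k has_real_derivative D (Suc k) e) (at e)" if "e \<in> {-d<..<d}" for k e
    using that \<open>d \<le> R\<close> termdiffs_strong'[of R "(diffs ^^ k) a" e] diffs_summable
    by (auto simp: D_def)
  moreover have "D 0 = (\<lambda>e. \<Sum>n. a n * e ^ n)"
    by (simp add: D_def)
  ultimately show ?thesis
    unfolding smooth_on_ball_def by blast
qed

lemma smooth_on_ball_cong:
  assumes "smooth_on_ball d h'" and eq: "\<And>e. e \<in> {-d<..<d} \<Longrightarrow> h e = h' e"
  shows "smooth_on_ball d h"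
proof -
  obtain D where D0: "D 0 = h'"
    and D: "\<And>n e. e \<in> {-d<..<d} \<Longrightarrow> (D n has_real_derivative D (Suc n) e) (at e)"
    using assms(1) unfolding smooth_on_ball_def by blast
  define D' where "D' n = (if n = 0 then h else D n)" for n
  have "(D' n has_real_derivative D' (Suc n) e) (at e)" if e: "e \<in> {-d<..<d}" for n e
  proof (cases n)
    case 0
    have "(h' has_real_derivative D 1 e) (at e)"
      using D[OF e, of 0] D0 by simp
    then have "(h has_real_derivative D 1 e) (at e)"
      by (rule has_field_derivative_transform_within_open[where S = "{-d<..<d}"]) (use e eq in auto)
    then show ?thesis
      using 0 by (simp add: D'_def)
  qed (use D[OF e, of n] in \<open>simp add: D'_def\<close>)
  moreover have "D' 0 = h"
    by (simp add: D'_def)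
  ultimately show ?thesis
    unfolding smooth_on_ball_def by blast
qed

lemma smooth_on_ball_set_integral_power_series:
  fixes R :: "'a \<Rightarrow> real" and r :: "nat \<Rightarrow> 'a \<Rightarrow> real"
  assumes R: "set_integrable M A R"
    and r: "\<And>n. r n \<in> borel_measurable M" "\<And>n x. x \<in> A \<Longrightarrow> \<bar>r n x\<bar> \<le> C * q ^ n"
    and q: "0 < q" "d * q \<le> 1"
  shows "smooth_on_ball d (\<lambda>e. \<Sum>n. (LINT x:A|M. R x * r n x) * e ^ n)"
proof (rule smooth_on_ball_power_series)
  show "summable (\<lambda>n. (LINT x:A|M. R x * r n x) * y ^ n)" if "\<bar>y\<bar> < 1 / q" for y
  proof (rule summable_power_series_geometric_bound)
    show "\<bar>LINT x:A|M. R x * r n x\<bar> \<le> (LINT x:A|M. \<bar>R x\<bar>) * C * q ^ n" for n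
      using abs_set_integral_mult_le[OF R r(1) r(2)] by (simp add: mult.assoc)
    show "\<bar>y\<bar> * q < 1"
      using that q by (simp add: field_simps)
  qed (use q in simp)
  show "d \<le> 1 / q"
    using q by (simp add: field_simps)
qed

lemma smooth_on_ball_set_integral_affine_times_series:
  fixes P Q L :: "'a \<Rightarrow> real" and r :: "nat \<Rightarrow> 'a \<Rightarrow> real"
  assumes A: "A \<in> sets M"
    and P: "set_integrable M A P" "\<And>x. x \<in> A \<Longrightarrow> c \<le> P x" and c: "0 < c"
    and Q: "Q \<in> borel_measurable M" "\<And>x. x \<in> A \<Longrightarrow> \<bar>Q x\<bar> \<le> B"
    and L: "L \<in> borel_measurable M"
    and r: "\<And>n. r n \<in> borel_measurable M" "\<And>n x. x \<in> A \<Longrightarrow> \<bar>r n x\<bar> \<le> C * q ^ n"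
    and q: "0 < q" and d: "d * q \<le> 1" "0 \<le> B" "d * B < c"
  shows "smooth_on_ball d (\<lambda>e. LINT x:A|M. (P x + e * Q x) * (L x + (\<Sum>n. r n x * e ^ n)))"
proof (rule smooth_on_ball_cong)
  fix e assume "e \<in> {-d<..<d}"
  then have "\<bar>e\<bar> * q < d * q" "\<bar>e\<bar> * B \<le> d * B"
    using q d(2) by (auto intro: mult_right_mono)
  then have e: "\<bar>e\<bar> * q < 1" "0 < c - \<bar>e\<bar> * B"
    using d by linarith+
  have "c - \<bar>e\<bar> * B \<le> P x" "c - \<bar>e\<bar> * B \<le> P x + e * Q x" if "x \<in> A" for x
  proof -
    have "\<bar>e * Q x\<bar> \<le> \<bar>e\<bar> * B"
      unfolding abs_mult using Q(2)[OF that] by (rule mult_left_mono) simp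
    then show "c - \<bar>e\<bar> * B \<le> P x" "c - \<bar>e\<bar> * B \<le> P x + e * Q x"
      using P(2)[OF that] by linarith+
  qed
  then show "(LINT x:A|M. (P x + e * Q x) * (L x + (\<Sum>n. r n x * e ^ n))) =
    (if set_integrable M A (\<lambda>x. P x * L x)
     then (LINT x:A|M. P x * L x) + e * (LINT x:A|M. L x * Q x)
       + ((\<Sum>n. (LINT x:A|M. P x * r n x) * e ^ n) + e * (\<Sum>n. (LINT x:A|M. Q x * r n x) * e ^ n))
     else 0)"
    using e q by (intro set_integral_affine_times_series[where c = "c - \<bar>e\<bar> * B", OF A P(1) _ _ _ Q L r]) auto
next
  have "set_integrable M A Q"
    using emeasure_finite_if_set_integrable_bounded_below[OF A P c]
    by (rule set_integrable_bounded_finite_emeasure[OF A _ Q])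
  then show "smooth_on_ball d (\<lambda>e. if set_integrable M A (\<lambda>x. P x * L x)
     then (LINT x:A|M. P x * L x) + e * (LINT x:A|M. L x * Q x)
       + ((\<Sum>n. (LINT x:A|M. P x * r n x) * e ^ n) + e * (\<Sum>n. (LINT x:A|M. Q x * r n x) * e ^ n))
     else 0)"
    using P(1) r q d(1)
    by (cases "set_integrable M A (\<lambda>x. P x * L x)")
      (auto intro!: smooth_on_ball_const smooth_on_ball_add smooth_on_ball_times_var
        smooth_on_ball_set_integral_power_series)
qed

section \<open>The series of ln (1 + z)\<close>

definition ln1p_coeff :: "nat \<Rightarrow> real \<Rightarrow> real" where
  "ln1p_coeff n z = - ((- z) ^ n) / real n"

lemma ln1p_coeff_sums:
  assumes "\<bar>e * z\<bar> < 1"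
  shows "(\<lambda>n. ln1p_coeff n z * e ^ n) sums ln (1 + e * z)"
proof -
  have "(- (e * z)) ^ n = (- z) ^ n * e ^ n" for n
    by (metis mult.commute mult_minus_left power_mult_distrib)
  then have "(\<lambda>n. ln1p_coeff n z * e ^ n) = (\<lambda>n. - ((- (e * z)) ^ n) / real n)"
    by (simp add: ln1p_coeff_def fun_eq_iff)
  then show ?thesis
    using ln_series'[OF assms] by simp
qed

lemma abs_ln1p_coeff_le: "\<bar>ln1p_coeff n z\<bar> \<le> \<bar>z\<bar> ^ n"
proof (cases "n = 0")
  case False
  then have "\<bar>z\<bar> ^ n / real n \<le> \<bar>z\<bar> ^ n"
    by (simp add: divide_le_eq mult_le_cancel_left1)
  then show ?thesis
    by (simp add: ln1p_coeff_def abs_divide power_abs)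
qed (simp add: ln1p_coeff_def)

lemma log_ratio_perturbed_sums:
  fixes a b c a' b' c' e :: real
  assumes pos: "0 < a" "0 < b" "0 < c"
    and small: "\<bar>e * (a' / a)\<bar> < 1" "\<bar>e * (b' / b)\<bar> < 1" "\<bar>e * (c' / c)\<bar> < 1"
  shows "(\<lambda>n. (ln1p_coeff n (a' / a) - ln1p_coeff n (b' / b) - ln1p_coeff n (c' / c)) / ln 2 * e ^ n)
    sums (log 2 ((a + e * a') / ((b + e * b') * (c + e * c'))) - log 2 (a / (b * c)))"
proof -
  have factor: "x + e * x' = x * (1 + e * (x' / x))" if "0 < x" for x x'
    using that by (simp add: field_simps)
  have "0 < 1 + z" if "\<bar>z\<bar> < 1" for z :: real
    using that by (simp add: abs_less_iff)
  then have "0 < 1 + e * (a' / a)" "0 < 1 + e * (b' / b)" "0 < 1 + e * (c' / c)"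
    using small by blast+
  then have "log 2 ((a + e * a') / ((b + e * b') * (c + e * c'))) - log 2 (a / (b * c))
      = (ln (1 + e * (a' / a)) - ln (1 + e * (b' / b)) - ln (1 + e * (c' / c))) / ln 2"
    unfolding factor[OF pos(1)] factor[OF pos(2)] factor[OF pos(3)] using pos
    by (simp add: log_def ln_mult ln_div diff_divide_distrib[symmetric])
  moreover have "(\<lambda>n. (ln1p_coeff n (a' / a) * e ^ n - ln1p_coeff n (b' / b) * e ^ n
      - ln1p_coeff n (c' / c) * e ^ n) / ln 2)
    sums ((ln (1 + e * (a' / a)) - ln (1 + e * (b' / b)) - ln (1 + e * (c' / c))) / ln 2)"
    using small by (intro sums_divide sums_diff ln1p_coeff_sums)
  ultimately show ?thesis
    by (simp add: algebra_simps)
qed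

section \<open>Marginals of a perturbed density\<close>

lemma measurable_M3_components [measurable]:
  "fst \<in> M3 \<rightarrow>\<^sub>M lborel" "(\<lambda>x. fst (snd x)) \<in> M3 \<rightarrow>\<^sub>M lborel" "(\<lambda>x. snd (snd x)) \<in> M3 \<rightarrow>\<^sub>M lborel"
  unfolding M3_def by measurable

lemma borel_measurable_uncurry3_compose:
  assumes "uncurry3 h \<in> borel_measurable M3"
    and "a \<in> borel_measurable N" "b \<in> borel_measurable N" "c \<in> borel_measurable N"
  shows "(\<lambda>x. h (a x) (b x) (c x)) \<in> borel_measurable N"
proof -
  have "(\<lambda>x. (a x, b x, c x)) \<in> N \<rightarrow>\<^sub>M M3"
    unfolding M3_def using assms(2-4) by measurable
  from measurable_compose[OF this assms(1)] show ?thesis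
    by simp
qed

lemma borel_measurable_marginals:
  assumes h: "uncurry3 h \<in> borel_measurable M3"
    and [measurable]: "X \<in> sets lborel" "Y \<in> sets lborel" "Z \<in> sets lborel"
  shows "(\<lambda>(t, s1). marg_TS1 X Y Z h t s1) \<in> borel_measurable (lborel \<Otimes>\<^sub>M lborel)"
    and "(\<lambda>(t, s2). marg_TS2 X Y Z h t s2) \<in> borel_measurable (lborel \<Otimes>\<^sub>M lborel)"
    and "marg_T X Y Z h \<in> borel_measurable lborel"
    and "marg_S1 X Y Z h \<in> borel_measurable lborel"
    and "marg_S2 X Y Z h \<in> borel_measurable lborel"
proof -
  note [measurable] = borel_measurable_uncurry3_compose[OF h]
  show "(\<lambda>(t, s1). marg_TS1 X Y Z h t s1) \<in> borel_measurable (lborel \<Otimes>\<^sub>M lborel)"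
    unfolding marg_TS1_def set_lebesgue_integral_def by measurable
  show "(\<lambda>(t, s2). marg_TS2 X Y Z h t s2) \<in> borel_measurable (lborel \<Otimes>\<^sub>M lborel)"
    unfolding marg_TS2_def set_lebesgue_integral_def by measurable
  show "marg_T X Y Z h \<in> borel_measurable lborel"
    unfolding marg_T_def marg_TS1_def set_lebesgue_integral_def by measurable
  show "marg_S1 X Y Z h \<in> borel_measurable lborel"
    unfolding marg_S1_def marg_TS1_def set_lebesgue_integral_def by measurable
  show "marg_S2 X Y Z h \<in> borel_measurable lborel"
    unfolding marg_S2_def marg_TS2_def set_lebesgue_integral_def by measurable
qed

locale density_bounded_below =
  fixes X Y Z :: "real set" and f :: "real \<Rightarrow> real \<Rightarrow> real \<Rightarrow> real" and \<xi> :: real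
  assumes meas: "X \<in> sets lborel" "Y \<in> sets lborel" "Z \<in> sets lborel"
    and f_meas: "uncurry3 f \<in> borel_measurable M3"
    and f_int: "set_integrable M3 (X \<times> Y \<times> Z) (uncurry3 f)"
    and nonempty: "X \<times> Y \<times> Z \<noteq> {}"
    and xi_pos: "\<xi> > 0"
    and f_lb: "\<And>t s1 s2. t \<in> X \<Longrightarrow> s1 \<in> Y \<Longrightarrow> s2 \<in> Z \<Longrightarrow> f t s1 s2 \<ge> \<xi>"
    and TS1_lb: "\<And>t s1. t \<in> X \<Longrightarrow> s1 \<in> Y \<Longrightarrow> marg_TS1 X Y Z f t s1 \<ge> \<xi>"
    and TS2_lb: "\<And>t s2. t \<in> X \<Longrightarrow> s2 \<in> Z \<Longrightarrow> marg_TS2 X Y Z f t s2 \<ge> \<xi>"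
    and T_lb: "\<And>t. t \<in> X \<Longrightarrow> marg_T X Y Z f t \<ge> \<xi>"
    and S1_lb: "\<And>s1. s1 \<in> Y \<Longrightarrow> marg_S1 X Y Z f s1 \<ge> \<xi>"
    and S2_lb: "\<And>s2. s2 \<in> Z \<Longrightarrow> marg_S2 X Y Z f s2 \<ge> \<xi>"
begin

lemmas f_measurable [measurable] =
  meas borel_measurable_uncurry3_compose[OF f_meas] borel_measurable_marginals[OF f_meas meas]

lemma box_sets: "X \<times> Y \<times> Z \<in> sets M3"
  unfolding M3_def using meas by auto

lemma set_integrable_f_sections:
  shows "t \<in> X \<Longrightarrow> s1 \<in> Y \<Longrightarrow> set_integrable lborel Z (f t s1)"
    and "t \<in> X \<Longrightarrow> s2 \<in> Z \<Longrightarrow> set_integrable lborel Y (\<lambda>s1. f t s1 s2)"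
    and "t \<in> X \<Longrightarrow> set_integrable lborel Y (marg_TS1 X Y Z f t)"
    and "s1 \<in> Y \<Longrightarrow> set_integrable lborel X (\<lambda>t. marg_TS1 X Y Z f t s1)"
    and "s2 \<in> Z \<Longrightarrow> set_integrable lborel X (\<lambda>t. marg_TS2 X Y Z f t s2)"
proof -
  have nonzero: "\<xi> \<le> p \<Longrightarrow> p \<noteq> 0" for p
    using xi_pos by auto
  show "t \<in> X \<Longrightarrow> s1 \<in> Y \<Longrightarrow> set_integrable lborel Z (f t s1)"
    using nonzero[OF TS1_lb] unfolding marg_TS1_def by (rule set_integrable_if_set_integral_nonzero)
  show "t \<in> X \<Longrightarrow> s2 \<in> Z \<Longrightarrow> set_integrable lborel Y (\<lambda>s1. f t s1 s2)"
    using nonzero[OF TS2_lb] unfolding marg_TS2_def by (rule set_integrable_if_set_integral_nonzero)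
  show "t \<in> X \<Longrightarrow> set_integrable lborel Y (marg_TS1 X Y Z f t)"
    using nonzero[OF T_lb] unfolding marg_T_def by (rule set_integrable_if_set_integral_nonzero)
  show "s1 \<in> Y \<Longrightarrow> set_integrable lborel X (\<lambda>t. marg_TS1 X Y Z f t s1)"
    using nonzero[OF S1_lb] unfolding marg_S1_def by (rule set_integrable_if_set_integral_nonzero)
  show "s2 \<in> Z \<Longrightarrow> set_integrable lborel X (\<lambda>t. marg_TS2 X Y Z f t s2)"
    using nonzero[OF S2_lb] unfolding marg_S2_def by (rule set_integrable_if_set_integral_nonzero)
qed

lemma emeasure_finite: "emeasure lborel X < \<infinity>" "emeasure lborel Y < \<infinity>" "emeasure lborel Z < \<infinity>"
proof -
  obtain t s1 s2 where box: "t \<in> X" "s1 \<in> Y" "s2 \<in> Z"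
    using nonempty by auto
  show "emeasure lborel X < \<infinity>"
    using set_integrable_f_sections(4)[OF box(2)] TS1_lb[OF _ box(2)] xi_pos
    by (rule emeasure_finite_if_set_integrable_bounded_below[OF meas(1)])
  show "emeasure lborel Y < \<infinity>"
    using set_integrable_f_sections(3)[OF box(1)] TS1_lb[OF box(1)] xi_pos
    by (rule emeasure_finite_if_set_integrable_bounded_below[OF meas(2)])
  show "emeasure lborel Z < \<infinity>"
    using set_integrable_f_sections(1)[OF box(1,2)] f_lb[OF box(1,2)] xi_pos
    by (rule emeasure_finite_if_set_integrable_bounded_below[OF meas(3)])
qed

end

locale bounded_perturbation = density_bounded_below +
  fixes g :: "real \<Rightarrow> real \<Rightarrow> real \<Rightarrow> real" and B :: real
  assumes g_meas: "uncurry3 g \<in> borel_measurable M3"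
    and g_bounded: "\<And>t s1 s2. \<bar>g t s1 s2\<bar> \<le> B"
begin

abbreviation f_perturbed :: "real \<Rightarrow> real \<Rightarrow> real \<Rightarrow> real \<Rightarrow> real" where
  "f_perturbed e \<equiv> \<lambda>t s1 s2. f t s1 s2 + e * g t s1 s2"

lemmas g_measurable [measurable] =
  borel_measurable_uncurry3_compose[OF g_meas] borel_measurable_marginals[OF g_meas meas]

lemma B_nonneg: "0 \<le> B"
  using g_bounded[of 0 0 0] by linarith

lemma abs_marginals_g_le:
  shows "\<bar>marg_TS1 X Y Z g t s1\<bar> \<le> B * measure lborel Z"
    and "\<bar>marg_TS2 X Y Z g t s2\<bar> \<le> B * measure lborel Y"
    and "\<bar>marg_T X Y Z g t\<bar> \<le> B * measure lborel Z * measure lborel Y"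
    and "\<bar>marg_S1 X Y Z g s1\<bar> \<le> B * measure lborel Z * measure lborel X"
    and "\<bar>marg_S2 X Y Z g s2\<bar> \<le> B * measure lborel Y * measure lborel X"
proof -
  show TS1: "\<bar>marg_TS1 X Y Z g t s1\<bar> \<le> B * measure lborel Z" for t s1
    unfolding marg_TS1_def by (rule abs_set_integral_le_measure[OF meas(3) emeasure_finite(3)]) (auto simp: g_bounded)
  show TS2: "\<bar>marg_TS2 X Y Z g t s2\<bar> \<le> B * measure lborel Y" for t s2
    unfolding marg_TS2_def by (rule abs_set_integral_le_measure[OF meas(2) emeasure_finite(2)]) (auto simp: g_bounded)
  show "\<bar>marg_T X Y Z g t\<bar> \<le> B * measure lborel Z * measure lborel Y"
    unfolding marg_T_def by (rule abs_set_integral_le_measure[OF meas(2) emeasure_finite(2)]) (auto simp: TS1)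
  show "\<bar>marg_S1 X Y Z g s1\<bar> \<le> B * measure lborel Z * measure lborel X"
    unfolding marg_S1_def by (rule abs_set_integral_le_measure[OF meas(1) emeasure_finite(1)]) (auto simp: TS1)
  show "\<bar>marg_S2 X Y Z g s2\<bar> \<le> B * measure lborel Y * measure lborel X"
    unfolding marg_S2_def by (rule abs_set_integral_le_measure[OF meas(1) emeasure_finite(1)]) (auto simp: TS2)
qed

lemma set_integrable_g_sections:
  shows "set_integrable lborel Z (g t s1)"
    and "set_integrable lborel Y (\<lambda>s1. g t s1 s2)"
    and "set_integrable lborel Y (marg_TS1 X Y Z g t)"
    and "set_integrable lborel X (\<lambda>t. marg_TS1 X Y Z g t s1)"
    and "set_integrable lborel X (\<lambda>t. marg_TS2 X Y Z g t s2)"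
  by (rule set_integrable_bounded_finite_emeasure[OF meas(3) emeasure_finite(3)]
      set_integrable_bounded_finite_emeasure[OF meas(2) emeasure_finite(2)]
      set_integrable_bounded_finite_emeasure[OF meas(1) emeasure_finite(1)];
      auto intro: g_bounded abs_marginals_g_le)+

lemma marginals_perturbed:
  shows "t \<in> X \<Longrightarrow> s1 \<in> Y \<Longrightarrow>
      marg_TS1 X Y Z (f_perturbed e) t s1 = marg_TS1 X Y Z f t s1 + e * marg_TS1 X Y Z g t s1"
    and "t \<in> X \<Longrightarrow> s2 \<in> Z \<Longrightarrow>
      marg_TS2 X Y Z (f_perturbed e) t s2 = marg_TS2 X Y Z f t s2 + e * marg_TS2 X Y Z g t s2"
    and "t \<in> X \<Longrightarrow> marg_T X Y Z (f_perturbed e) t = marg_T X Y Z f t + e * marg_T X Y Z g t"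
    and "s1 \<in> Y \<Longrightarrow> marg_S1 X Y Z (f_perturbed e) s1 = marg_S1 X Y Z f s1 + e * marg_S1 X Y Z g s1"
    and "s2 \<in> Z \<Longrightarrow> marg_S2 X Y Z (f_perturbed e) s2 = marg_S2 X Y Z f s2 + e * marg_S2 X Y Z g s2"
proof -
  show TS1: "marg_TS1 X Y Z (f_perturbed e) t s1 = marg_TS1 X Y Z f t s1 + e * marg_TS1 X Y Z g t s1"
    if "t \<in> X" "s1 \<in> Y" for t s1
    unfolding marg_TS1_def
    by (rule set_integral_add_scaled[OF meas(3) set_integrable_f_sections(1)[OF that]
          set_integrable_g_sections(1)]) simp
  show TS2: "marg_TS2 X Y Z (f_perturbed e) t s2 = marg_TS2 X Y Z f t s2 + e * marg_TS2 X Y Z g t s2"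
    if "t \<in> X" "s2 \<in> Z" for t s2
    unfolding marg_TS2_def
    by (rule set_integral_add_scaled[OF meas(2) set_integrable_f_sections(2)[OF that]
          set_integrable_g_sections(2)]) simp
  show "marg_T X Y Z (f_perturbed e) t = marg_T X Y Z f t + e * marg_T X Y Z g t" if "t \<in> X"
    unfolding marg_T_def
    by (rule set_integral_add_scaled[OF meas(2) set_integrable_f_sections(3)[OF that]
          set_integrable_g_sections(3)]) (simp add: TS1 that)
  show "marg_S1 X Y Z (f_perturbed e) s1 = marg_S1 X Y Z f s1 + e * marg_S1 X Y Z g s1" if "s1 \<in> Y"
    unfolding marg_S1_def
    by (rule set_integral_add_scaled[OF meas(1) set_integrable_f_sections(4)[OF that]
          set_integrable_g_sections(4)]) (simp add: TS1 that)
  show "marg_S2 X Y Z (f_perturbed e) s2 = marg_S2 X Y Z f s2 + e * marg_S2 X Y Z g s2" if "s2 \<in> Z"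
    unfolding marg_S2_def
    by (rule set_integral_add_scaled[OF meas(1) set_integrable_f_sections(5)[OF that]
          set_integrable_g_sections(5)]) (simp add: TS2 that)
qed

definition ratio_TS :: "real \<Rightarrow> real \<Rightarrow> real \<Rightarrow> real" where
  "ratio_TS t s1 s2 = (marg_TS1 X Y Z g t s1 + marg_TS2 X Y Z g t s2)
                      / (marg_TS1 X Y Z f t s1 + marg_TS2 X Y Z f t s2)"

definition ratio_T :: "real \<Rightarrow> real" where
  "ratio_T t = marg_T X Y Z g t / marg_T X Y Z f t"

definition ratio_S :: "real \<Rightarrow> real \<Rightarrow> real" where
  "ratio_S s1 s2 = (marg_S1 X Y Z g s1 + marg_S2 X Y Z g s2) / (marg_S1 X Y Z f s1 + marg_S2 X Y Z f s2)"

definition redundancy_coeff :: "nat \<Rightarrow> real \<Rightarrow> real \<Rightarrow> real \<Rightarrow> real" where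
  "redundancy_coeff n t s1 s2 =
     (ln1p_coeff n (ratio_TS t s1 s2) - ln1p_coeff n (ratio_T t) - ln1p_coeff n (ratio_S s1 s2)) / ln 2"

lemma ratios_bounded:
  obtains q where "0 < q"
    and "\<And>t s1 s2. t \<in> X \<Longrightarrow> s1 \<in> Y \<Longrightarrow> s2 \<in> Z \<Longrightarrow>
           \<bar>ratio_TS t s1 s2\<bar> \<le> q \<and> \<bar>ratio_T t\<bar> \<le> q \<and> \<bar>ratio_S s1 s2\<bar> \<le> q"
proof
  define mX mY mZ where "mX = measure lborel X" and "mY = measure lborel Y" and "mZ = measure lborel Z"
  define K where "K = B * mZ + B * mY + B * mZ * mY + B * mZ * mX + B * mY * mX"
  have nonneg: "0 \<le> B * mZ" "0 \<le> B * mY" "0 \<le> B * mZ * mY" "0 \<le> B * mZ * mX" "0 \<le> B * mY * mX"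
    using B_nonneg by (simp_all add: mX_def mY_def mZ_def)
  have ratio_le: "\<bar>a / b\<bar> \<le> (K + 1) / \<xi>" if "\<bar>a\<bar> \<le> K" "\<xi> \<le> b" for a b
  proof -
    have "\<bar>a\<bar> / b \<le> (K + 1) / \<xi>"
      using that xi_pos nonneg unfolding K_def by (intro frac_le) auto
    then show ?thesis
      using that xi_pos by (simp add: abs_divide)
  qed
  show "0 < (K + 1) / \<xi>"
    using nonneg xi_pos unfolding K_def by simp
  fix t s1 s2 assume box: "t \<in> X" "s1 \<in> Y" "s2 \<in> Z"
  note g_le = abs_marginals_g_le[folded mX_def mY_def mZ_def]
  have "\<bar>marg_TS1 X Y Z g t s1 + marg_TS2 X Y Z g t s2\<bar> \<le> K"
    using g_le(1)[of t s1] g_le(2)[of t s2] nonneg unfolding K_def by linarith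
  moreover have "\<bar>marg_T X Y Z g t\<bar> \<le> K"
    using g_le(3)[of t] nonneg unfolding K_def by linarith
  moreover have "\<bar>marg_S1 X Y Z g s1 + marg_S2 X Y Z g s2\<bar> \<le> K"
    using g_le(4)[of s1] g_le(5)[of s2] nonneg unfolding K_def by linarith
  moreover have "\<xi> \<le> marg_TS1 X Y Z f t s1 + marg_TS2 X Y Z f t s2" "\<xi> \<le> marg_T X Y Z f t"
    "\<xi> \<le> marg_S1 X Y Z f s1 + marg_S2 X Y Z f s2"
    using TS1_lb[OF box(1,2)] TS2_lb[OF box(1,3)] T_lb[OF box(1)] S1_lb[OF box(2)] S2_lb[OF box(3)] xi_pos
    by linarith+
  ultimately show "\<bar>ratio_TS t s1 s2\<bar> \<le> (K + 1) / \<xi> \<and> \<bar>ratio_T t\<bar> \<le> (K + 1) / \<xi>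
      \<and> \<bar>ratio_S s1 s2\<bar> \<le> (K + 1) / \<xi>"
    unfolding ratio_TS_def ratio_T_def ratio_S_def using ratio_le by blast
qed

lemma abs_redundancy_coeff_le:
  assumes "\<bar>ratio_TS t s1 s2\<bar> \<le> q" "\<bar>ratio_T t\<bar> \<le> q" "\<bar>ratio_S s1 s2\<bar> \<le> q"
  shows "\<bar>redundancy_coeff n t s1 s2\<bar> \<le> 3 / ln 2 * q ^ n"
proof -
  have coeff_le: "\<bar>ln1p_coeff n z\<bar> \<le> q ^ n" if "\<bar>z\<bar> \<le> q" for z
    using abs_ln1p_coeff_le[of n z] power_mono[OF that abs_ge_zero, of n] by linarith
  have "\<bar>ln1p_coeff n (ratio_TS t s1 s2) - ln1p_coeff n (ratio_T t) - ln1p_coeff n (ratio_S s1 s2)\<bar>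
      \<le> 3 * q ^ n"
    using coeff_le[OF assms(1)] coeff_le[OF assms(2)] coeff_le[OF assms(3)] by linarith
  then show ?thesis
    unfolding redundancy_coeff_def by (simp add: abs_divide divide_right_mono)
qed

lemma i_sx_cap_perturbed_sums:
  assumes box: "t \<in> X" "s1 \<in> Y" "s2 \<in> Z"
    and ratio_le: "\<bar>ratio_TS t s1 s2\<bar> \<le> q" "\<bar>ratio_T t\<bar> \<le> q" "\<bar>ratio_S s1 s2\<bar> \<le> q"
    and e: "\<bar>e\<bar> * q < 1"
  shows "(\<lambda>n. redundancy_coeff n t s1 s2 * e ^ n) sums
           (i_sx_cap X Y Z (f_perturbed e) t s1 s2 - i_sx_cap X Y Z f t s1 s2)"
proof -
  have "\<bar>e * z\<bar> < 1" if "\<bar>z\<bar> \<le> q" for z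
    using mult_left_mono[OF that abs_ge_zero[of e]] e by (simp add: abs_mult)
  then have small: "\<bar>e * ratio_TS t s1 s2\<bar> < 1" "\<bar>e * ratio_T t\<bar> < 1" "\<bar>e * ratio_S s1 s2\<bar> < 1"
    using ratio_le by blast+
  have pos: "0 < marg_TS1 X Y Z f t s1 + marg_TS2 X Y Z f t s2" "0 < marg_T X Y Z f t"
    "0 < marg_S1 X Y Z f s1 + marg_S2 X Y Z f s2"
    using TS1_lb[OF box(1,2)] TS2_lb[OF box(1,3)] T_lb[OF box(1)] S1_lb[OF box(2)] S2_lb[OF box(3)] xi_pos
    by linarith+
  have "i_sx_cap X Y Z (f_perturbed e) t s1 s2 =
      log 2 ((marg_TS1 X Y Z f t s1 + marg_TS2 X Y Z f t s2 + e * (marg_TS1 X Y Z g t s1 + marg_TS2 X Y Z g t s2))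
        / ((marg_T X Y Z f t + e * marg_T X Y Z g t)
           * (marg_S1 X Y Z f s1 + marg_S2 X Y Z f s2 + e * (marg_S1 X Y Z g s1 + marg_S2 X Y Z g s2))))"
    unfolding i_sx_cap_def using marginals_perturbed box by (simp add: algebra_simps)
  then show ?thesis
    using log_ratio_perturbed_sums[OF pos small[unfolded ratio_TS_def ratio_T_def ratio_S_def]]
    unfolding redundancy_coeff_def ratio_TS_def ratio_T_def ratio_S_def i_sx_cap_def[of _ _ _ f]
    by simp
qed

lemma smooth_on_ball_I_sx_cap_perturbed: "\<exists>\<delta>>0. smooth_on_ball \<delta> (\<lambda>e. I_sx_cap X Y Z (f_perturbed e))"
proof -
  obtain q where q: "0 < q"
    and ratio_le: "\<And>t s1 s2. t \<in> X \<Longrightarrow> s1 \<in> Y \<Longrightarrow> s2 \<in> Z \<Longrightarrow>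
           \<bar>ratio_TS t s1 s2\<bar> \<le> q \<and> \<bar>ratio_T t\<bar> \<le> q \<and> \<bar>ratio_S s1 s2\<bar> \<le> q"
    using ratios_bounded by blast
  define \<delta> where "\<delta> = min (1 / q) (\<xi> / (B + 1))"
  have \<delta>: "0 < \<delta>" "\<delta> * q \<le> 1" "\<delta> * B < \<xi>"
  proof -
    have "\<delta> * B \<le> \<xi> / (B + 1) * B"
      unfolding \<delta>_def using B_nonneg by (intro mult_right_mono) auto
    also have "\<dots> < \<xi>"
      using B_nonneg xi_pos by (simp add: field_simps)
    finally show "\<delta> * B < \<xi>" .
    show "0 < \<delta>" "\<delta> * q \<le> 1"
      unfolding \<delta>_def using q xi_pos B_nonneg by (auto simp: min_def field_simps)
  qed
  have expansion: "uncurry3 (f_perturbed e) x * uncurry3 (i_sx_cap X Y Z (f_perturbed e)) x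
      = (uncurry3 f x + e * uncurry3 g x)
        * (uncurry3 (i_sx_cap X Y Z f) x + (\<Sum>n. uncurry3 (redundancy_coeff n) x * e ^ n))"
    if x: "x \<in> X \<times> Y \<times> Z" and e: "e \<in> {-\<delta><..<\<delta>}" for x e
  proof -
    have "\<bar>e\<bar> * q < \<delta> * q"
      using e q by (intro mult_strict_right_mono) auto
    then have "(\<lambda>n. uncurry3 (redundancy_coeff n) x * e ^ n) sums
        (uncurry3 (i_sx_cap X Y Z (f_perturbed e)) x - uncurry3 (i_sx_cap X Y Z f) x)"
      using x ratio_le \<delta>(2) by (intro i_sx_cap_perturbed_sums[where q = q]) auto
    then show ?thesis
      by (simp add: sums_iff)
  qed
  have "smooth_on_ball \<delta> (\<lambda>e. LINT x:X \<times> Y \<times> Z|M3. (uncurry3 f x + e * uncurry3 g x)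
      * (uncurry3 (i_sx_cap X Y Z f) x + (\<Sum>n. uncurry3 (redundancy_coeff n) x * e ^ n)))"
  proof (rule smooth_on_ball_set_integral_affine_times_series[OF box_sets f_int _ xi_pos g_meas _ _ _ _ q \<delta>(2) B_nonneg \<delta>(3)])
    show "uncurry3 (i_sx_cap X Y Z f) \<in> borel_measurable M3"
      unfolding i_sx_cap_def by measurable
    show "uncurry3 (redundancy_coeff n) \<in> borel_measurable M3" for n
      unfolding redundancy_coeff_def ratio_TS_def ratio_T_def ratio_S_def ln1p_coeff_def by measurable
    show "\<bar>uncurry3 (redundancy_coeff n) x\<bar> \<le> 3 / ln 2 * q ^ n" if "x \<in> X \<times> Y \<times> Z" for n x
      using that ratio_le by (intro abs_redundancy_coeff_le) auto
  qed (auto intro: f_lb g_bounded)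
  then have "smooth_on_ball \<delta> (\<lambda>e. I_sx_cap X Y Z (f_perturbed e))"
  proof (rule smooth_on_ball_cong)
    fix e assume e: "e \<in> {-\<delta><..<\<delta>}"
    show "I_sx_cap X Y Z (f_perturbed e) = (LINT x:X \<times> Y \<times> Z|M3. (uncurry3 f x + e * uncurry3 g x)
        * (uncurry3 (i_sx_cap X Y Z f) x + (\<Sum>n. uncurry3 (redundancy_coeff n) x * e ^ n)))"
      unfolding I_sx_cap_def using expansion[OF _ e] by (intro set_lebesgue_integral_cong[OF box_sets]) auto
  qed
  with \<delta>(1) show ?thesis
    by blast
qed

end

theorem mainTheorem2:
  fixes X Y Z :: "real set" and f :: "real \<Rightarrow> real \<Rightarrow> real \<Rightarrow> real" and \<xi> :: real
  assumes meas: "X \<in> sets lborel" "Y \<in> sets lborel" "Z \<in> sets lborel"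
    and f_meas: "(\<lambda>x. f (fst x) (fst (snd x)) (snd (snd x))) \<in> borel_measurable M3"
    and f_int: "set_integrable M3 (X \<times> Y \<times> Z) (\<lambda>x. f (fst x) (fst (snd x)) (snd (snd x)))"
    and f_norm: "(LINT x:(X \<times> Y \<times> Z)|M3. f (fst x) (fst (snd x)) (snd (snd x))) = 1"
    and xi_pos: "\<xi> > 0"
    and f_lb: "\<And>t s1 s2. t \<in> X \<Longrightarrow> s1 \<in> Y \<Longrightarrow> s2 \<in> Z \<Longrightarrow> f t s1 s2 \<ge> \<xi>"
    and TS1_lb: "\<And>t s1. t \<in> X \<Longrightarrow> s1 \<in> Y \<Longrightarrow> marg_TS1 X Y Z f t s1 \<ge> \<xi>"
    and TS2_lb: "\<And>t s2. t \<in> X \<Longrightarrow> s2 \<in> Z \<Longrightarrow> marg_TS2 X Y Z f t s2 \<ge> \<xi>"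
    and T_lb: "\<And>t. t \<in> X \<Longrightarrow> marg_T X Y Z f t \<ge> \<xi>"
    and S1_lb: "\<And>s1. s1 \<in> Y \<Longrightarrow> marg_S1 X Y Z f s1 \<ge> \<xi>"
    and S2_lb: "\<And>s2. s2 \<in> Z \<Longrightarrow> marg_S2 X Y Z f s2 \<ge> \<xi>"
  shows "\<forall>g :: real \<Rightarrow> real \<Rightarrow> real \<Rightarrow> real.
           (\<lambda>x. g (fst x) (fst (snd x)) (snd (snd x))) \<in> borel_measurable M3 \<and>
           (\<exists>B. \<forall>t s1 s2. \<bar>g t s1 s2\<bar> \<le> B) \<longrightarrow>
           (\<exists>\<delta>>0. \<exists>D :: nat \<Rightarrow> real \<Rightarrow> real.
              D 0 = (\<lambda>\<epsilon>. I_sx_cap X Y Z (\<lambda>t s1 s2. f t s1 s2 + \<epsilon> * g t s1 s2)) \<and>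
              (\<forall>n. \<forall>\<epsilon>\<in>{-\<delta><..<\<delta>}. (D n has_real_derivative D (Suc n) \<epsilon>) (at \<epsilon>)))"
proof (intro allI impI)
  fix g :: "real \<Rightarrow> real \<Rightarrow> real \<Rightarrow> real"
  assume "uncurry3 g \<in> borel_measurable M3 \<and> (\<exists>B. \<forall>t s1 s2. \<bar>g t s1 s2\<bar> \<le> B)"
  then obtain B where g_meas: "uncurry3 g \<in> borel_measurable M3"
    and g_bounded: "\<And>t s1 s2. \<bar>g t s1 s2\<bar> \<le> B"
    by blast
  (* The normalisation of f only enters through the nonemptiness of its support. *)
  have "X \<times> Y \<times> Z \<noteq> {}"
    using f_norm by (auto simp: set_lebesgue_integral_def)
  then interpret bounded_perturbation X Y Z f \<xi> g B
    using assms g_meas g_bounded by unfold_locales auto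
  show "\<exists>\<delta>>0. \<exists>D :: nat \<Rightarrow> real \<Rightarrow> real.
          D 0 = (\<lambda>\<epsilon>. I_sx_cap X Y Z (\<lambda>t s1 s2. f t s1 s2 + \<epsilon> * g t s1 s2)) \<and>
          (\<forall>n. \<forall>\<epsilon>\<in>{-\<delta><..<\<delta>}. (D n has_real_derivative D (Suc n) \<epsilon>) (at \<epsilon>))"
    using smooth_on_ball_I_sx_cap_perturbed unfolding smooth_on_ball_def by blast
qed

end
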